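(* For every $n\ge 12$, there is an assignment $x:V\to\{-1,1\}$ with $x_{-\mathbf v}=-x_{\mathbf v}$ for all $\mathbf v\in V$ that satisfies clauses of $\Phi_n$ of total weight at least $\frac{3(\sqrt{21}-4)}{2}$.
   Context: Let $\mathbf e_1,\dots,\mathbf e_n$ be the standard basis of $\mathbb R^n$ and $V=\{\frac{1}{\sqrt3}(b_1\mathbf e_i+b_2\mathbf e_j+b_3\mathbf e_k): b_1,b_2,b_3\in\{-1,1\},\ 1\le i<j<k\le n\}$. To each $\mathbf v\in V$ associate a Boolean variable $x_{\mathbf v}\in\{-1,1\}$, with $x_{-\mathbf v}=-x_{\mathbf v}$. $\mathrm{NAE}(y_1,\dots,y_k)$ is satisfied iff not all $y_i$ are equal. $\mathcal C_3$ is the set of clauses $\mathrm{NAE}(x_{\mathbf v_1},x_{\mathbf v_2},x_{\mathbf v_3})$ with $\mathbf v_1=\frac{1}{\sqrt3}(s_1\mathbf e_{i_1}-s_2\mathbf e_{i_2}+s_4\mathbf e_{i_4})$, $\mathbf v_2=\frac{1}{\sqrt3}(s_2\mathbf e_{i_2}-s_3\mathbf e_{i_3}+s_5\mathbf e_{i_5})$, $\mathbf v_3=\frac{1}{\sqrt3}(s_3\mathbf e_{i_3}-s_1\mathbf e_{i_1}+s_6\mathbf e_{i_6})$ for distinct indices $i_1,\dots,i_6\in[n]$ and signs $s_1,\dots,s_6\in\{-1,1\}$. $\mathcal C_5$ is the set of clauses $\mathrm{NAE}(x_{\mathbf v_1},\dots,x_{\mathbf v_5})$ with $\mathbf v_j=\frac{1}{\sqrt3}(s_1\mathbf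 e_{i_1}+s_{2j}\mathbf e_{i_{2j}}+s_{2j+1}\mathbf e_{i_{2j+1}})$ for $j\in\{1,2,3,4\}$ and $\mathbf v_5=\frac{1}{\sqrt3}(s_{10}\mathbf e_{i_{10}}+s_{11}\mathbf e_{i_{11}}+s_{12}\mathbf e_{i_{12}})$ for distinct $i_1,\dots,i_{12}\in[n]$ and signs $s_1,\dots,s_{12}\in\{-1,1\}$. $\Phi_n$ is the instance with clause set $\mathcal C_3\cup\mathcal C_5$, each clause of $\mathcal C_3$ having weight $\frac{1-3/\sqrt{21}}{|\mathcal C_3|}$ and each clause of $\mathcal C_5$ having weight $\frac{3}{\sqrt{21}\,|\mathcal C_5|}$. *)

theory Defs
  imports Complex_Main
begin

text \<open>Vectors of R^n are represented as functions nat => real supported on the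
index set [n] = {1..n}. e_i is the i-th standard basis vector.\<close>

definition ebasis :: "nat \<Rightarrow> nat \<Rightarrow> real" where
  "ebasis i = (\<lambda>m. if m = i then 1 else 0)"

definition vec3 :: "real \<Rightarrow> nat \<Rightarrow> real \<Rightarrow> nat \<Rightarrow> real \<Rightarrow> nat \<Rightarrow> (nat \<Rightarrow> real)" where
  "vec3 a i b j c k = (\<lambda>m. (a * ebasis i m + b * ebasis j m + c * ebasis k m) / sqrt 3)"

definition Vset :: "nat \<Rightarrow> (nat \<Rightarrow> real) set" where
  "Vset n = {v. \<exists>b1 b2 b3 i j k. v = vec3 b1 i b2 j b3 k \<and>
      b1 \<in> {-1,1} \<and> b2 \<in> {-1,1} \<and> b3 \<in> {-1,1} \<and> 1 \<le> i \<and> i < j \<and> j < k \<and> k \<le> n}"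

text \<open>A clause is represented by the set of (vectors indexing) its literals.\<close>
definition C3 :: "nat \<Rightarrow> (nat \<Rightarrow> real) set set" where
  "C3 n = {C. \<exists>i1 i2 i3 i4 i5 i6 s1 s2 s3 s4 s5 s6.
      distinct [i1,i2,i3,i4,i5,i6] \<and> set [i1,i2,i3,i4,i5,i6] \<subseteq> {1..n} \<and>
      (\<forall>s\<in>set [s1,s2,s3,s4,s5,s6]. s \<in> {-1,1::real}) \<and>
      C = {vec3 s1 i1 (-s2) i2 s4 i4, vec3 s2 i2 (-s3) i3 s5 i5, vec3 s3 i3 (-s1) i1 s6 i6}}"

definition C5 :: "nat \<Rightarrow> (nat \<Rightarrow> real) set set" where
  "C5 n = {C. \<exists>i1 i2 i3 i4 i5 i6 i7 i8 i9 i10 i11 i12 s1 s2 s3 s4 s5 s6 s7 s8 s9 s10 s11 s12.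
      distinct [i1,i2,i3,i4,i5,i6,i7,i8,i9,i10,i11,i12] \<and>
      set [i1,i2,i3,i4,i5,i6,i7,i8,i9,i10,i11,i12] \<subseteq> {1..n} \<and>
      (\<forall>s\<in>set [s1,s2,s3,s4,s5,s6,s7,s8,s9,s10,s11,s12]. s \<in> {-1,1::real}) \<and>
      C = {vec3 s1 i1 s2 i2 s3 i3, vec3 s1 i1 s4 i4 s5 i5, vec3 s1 i1 s6 i6 s7 i7,
           vec3 s1 i1 s8 i8 s9 i9, vec3 s10 i10 s11 i11 s12 i12}}"

definition nae_sat :: "((nat \<Rightarrow> real) \<Rightarrow> real) \<Rightarrow> (nat \<Rightarrow> real) set \<Rightarrow> bool" where
  "nae_sat x C = (\<exists>u\<in>C. \<exists>w\<in>C. x u \<noteq> x w)"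

definition Phi_weight :: "nat \<Rightarrow> ((nat \<Rightarrow> real) \<Rightarrow> real) \<Rightarrow> real" where
  "Phi_weight n x =
     (\<Sum>C\<in>{C\<in>C3 n. nae_sat x C}. (1 - 3 / sqrt 21) / real (card (C3 n))) +
     (\<Sum>C\<in>{C\<in>C5 n. nae_sat x C}. 3 / (sqrt 21 * real (card (C5 n))))"

end

theory Submission
  imports Defs "HOL-Library.FuncSet"
begin

(*
  Randomised rounding.  Every coordinate m independently gets an outcome (sigma_m, beta_m): a
  uniform sign sigma_m and a bit beta_m that is set with probability r.  For v supported on S put
  x_v = sign (sum_(m in S) v_m sigma_m tau_m), where tau_m = -1 iff beta_l is set for both l in
  S - {m}.  As a sum of three terms +-1/sqrt 3 the argument of sign is never 0, so x is odd in v.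
  The literals of a clause of C_3 (of C_5) only see the outcomes at 6 (at 12) distinct
  coordinates, and the signs s_k of the clause can be absorbed into the sigma's because the law
  of an outcome is invariant under flipping its sign.  So every clause of C_3 is satisfied with
  probability 15/16 - 3/4 r^2 + 3/4 r^4, every clause of C_5 with probability
  215/256 + 13/32 r^2 - 15/32 r^4 + 1/8 r^6 - 1/16 r^8, and for r^2 = (1 - sqrt (8 sqrt 21 - 36))/2
  the expected weight of the satisfied clauses is exactly 3 (sqrt 21 - 4)/2.  Some outcome does
  at least as well as the average.
*)

type_synonym outcome = "real \<times> bool"

definition outcomes :: "outcome set" where
  "outcomes = {-1, 1} \<times> UNIV"

definition outcome_prob :: "real \<Rightarrow> outcome \<Rightarrow> real" where
  "outcome_prob r d = (if snd d then r else 1 - r) / 2"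

definition expect1 :: "real \<Rightarrow> (outcome \<Rightarrow> real) \<Rightarrow> real" where
  "expect1 r f = (\<Sum>d\<in>outcomes. outcome_prob r d * f d)"

lemma outcomes_eq: "outcomes = {(-1, False), (-1, True), (1, False), (1, True)}"
  unfolding outcomes_def by auto

lemma finite_outcomes [simp]: "finite outcomes"
  unfolding outcomes_eq by simp

lemma expect1_expand:
  "expect1 r f = (1 - r) / 2 * f (-1, False) + r / 2 * f (-1, True)
     + (1 - r) / 2 * f (1, False) + r / 2 * f (1, True)"
  unfolding expect1_def outcomes_eq by (simp add: outcome_prob_def)

lemma expect1_const [simp]: "expect1 r (\<lambda>d. c) = c"
  and expect1_cmult [simp]: "expect1 r (\<lambda>d. c * f d) = c * expect1 r f"
  and expect1_multc [simp]: "expect1 r (\<lambda>d. f d * c) = expect1 r f * c"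
  and expect1_diff [simp]: "expect1 r (\<lambda>d. f d - g d) = expect1 r f - expect1 r g"
  and expect1_add [simp]: "expect1 r (\<lambda>d. f d + g d) = expect1 r f + expect1 r g"
  unfolding expect1_expand by (simp_all add: algebra_simps)

definition flip_sign :: "real \<Rightarrow> outcome \<Rightarrow> outcome" where
  "flip_sign s d = (s * fst d, snd d)"

lemma expect1_flip_sign: "s \<in> {-1, 1} \<Longrightarrow> expect1 r (\<lambda>d. f (flip_sign s d)) = expect1 r f"
  unfolding expect1_expand flip_sign_def by (auto simp: algebra_simps)

fun expect :: "real \<Rightarrow> nat \<Rightarrow> (outcome list \<Rightarrow> real) \<Rightarrow> real" where
  "expect r 0 h = h []"
| "expect r (Suc k) h = expect1 r (\<lambda>d. expect r k (\<lambda>ds. h (d # ds)))"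

definition prod_prob :: "real \<Rightarrow> nat set \<Rightarrow> (nat \<Rightarrow> outcome) \<Rightarrow> real" where
  "prod_prob r I g = (\<Prod>i\<in>I. outcome_prob r (g i))"

lemma sum_outcome_prob: "(\<Sum>d\<in>outcomes. outcome_prob r d) = 1"
  unfolding outcomes_eq by (simp add: outcome_prob_def)

lemma sum_prod_prob: "finite I \<Longrightarrow> (\<Sum>g\<in>PiE I (\<lambda>_. outcomes). prod_prob r I g) = 1"
  using prod_sum_PiE[of I "\<lambda>_. outcomes" "\<lambda>_. outcome_prob r", symmetric]
  by (simp add: prod_prob_def sum_outcome_prob)

lemma prod_prob_nonneg: "0 \<le> r \<Longrightarrow> r \<le> 1 \<Longrightarrow> 0 \<le> prod_prob r I g"
  unfolding prod_prob_def outcome_prob_def by (intro prod_nonneg) auto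

lemma sum_PiE_insert:
  assumes "j \<notin> I" "finite I"
  shows "(\<Sum>g\<in>PiE (insert j I) B. F g) = (\<Sum>d\<in>B j. \<Sum>g\<in>PiE I B. F (g(j := d)))"
proof -
  have "(\<Sum>g\<in>PiE (insert j I) B. F g) = (\<Sum>(d, g)\<in>B j \<times> PiE I B. F (g(j := d)))"
    unfolding PiE_insert_eq by (subst sum.reindex) (auto simp: inj_combinator assms case_prod_beta)
  then show ?thesis
    by (simp add: sum.cartesian_product)
qed

lemma sum_prod_prob_eq_expect:
  assumes "finite I" "distinct (map fst js)" "set (map fst js) \<subseteq> I" "\<forall>(i, s)\<in>set js. s \<in> {-1, 1}"
  shows "(\<Sum>g\<in>PiE I (\<lambda>_. outcomes). prod_prob r I g * h (map (\<lambda>(i, s). flip_sign s (g i)) js))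
       = expect r (length js) h"
  using assms
proof (induction js arbitrary: I h)
  case Nil
  then show ?case by (simp add: sum_distrib_right[symmetric] sum_prod_prob)
next
  case (Cons p js)
  obtain j s where p: "p = (j, s)" by force
  define I' where "I' = I - {j}"
  have I: "I = insert j I'" and j: "j \<notin> I'" and I': "finite I'" "set (map fst js) \<subseteq> I'"
    using Cons.prems p by (auto simp: I'_def)
  let ?loc = "\<lambda>g. map (\<lambda>(i, s). flip_sign s (g i)) js"
  have "j \<notin> fst ` set js"
    using Cons.prems p by simp
  then have loc_upd: "?loc (g(j := d)) = ?loc g" for g d
    by (force intro!: map_cong)
  have prob_upd: "prod_prob r I (g(j := d)) = outcome_prob r d * prod_prob r I' g" for g d
    unfolding prod_prob_def I using j I' by (auto intro!: prod.cong)
  have "(\<Sum>g\<in>PiE I (\<lambda>_. outcomes). prod_prob r I g * h (map (\<lambda>(i, s). flip_sign s (g i)) (p # js)))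
      = (\<Sum>d\<in>outcomes. outcome_prob r d *
           (\<Sum>g\<in>PiE I' (\<lambda>_. outcomes). prod_prob r I' g * h (flip_sign s d # ?loc g)))"
    unfolding I p using j I'
    by (simp add: sum_PiE_insert loc_upd prob_upd[unfolded I] fun_upd_same sum_distrib_left
        mult.assoc del: fun_upd_apply)
  also have "\<dots> = expect1 r (\<lambda>d. expect r (length js) (\<lambda>ds. h (flip_sign s d # ds)))"
    using Cons.IH[OF I'(1), of "\<lambda>ds. h (flip_sign s d # ds)" for d] Cons.prems I'(2)
    by (simp add: expect1_def)
  also have "\<dots> = expect r (length (p # js)) h"
    using expect1_flip_sign[of s r "\<lambda>d. expect r (length js) (\<lambda>ds. h (d # ds))"] Cons.prems p
    by simp
  finally show ?case .
qed

lemma exists_ge_weighted_average: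
  fixes f w :: "'a \<Rightarrow> real"
  assumes "finite A" "A \<noteq> {}" "\<And>a. a \<in> A \<Longrightarrow> 0 \<le> w a" "(\<Sum>a\<in>A. w a) = 1"
  shows "\<exists>a\<in>A. (\<Sum>b\<in>A. w b * f b) \<le> f a"
proof -
  have "Max (f ` A) \<in> f ` A"
    using assms(1,2) by simp
  then obtain a where a: "a \<in> A" "f a = Max (f ` A)"
    by (metis imageE)
  with assms(1) have max: "f b \<le> f a" if "b \<in> A" for b
    using that by simp
  have "(\<Sum>b\<in>A. w b * f b) \<le> (\<Sum>b\<in>A. w b * f a)"
    using assms(3) max by (intro sum_mono mult_left_mono) auto
  also have "\<dots> = f a"
    using assms(4) by (simp add: sum_distrib_right[symmetric])
  finally show ?thesis
    using a(1) by blast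
qed

definition nae_indicator :: "real list \<Rightarrow> real" where
  "nae_indicator ys = 1 - (\<Prod>y\<leftarrow>ys. of_bool (y = 1)) - (\<Prod>y\<leftarrow>ys. of_bool (y = -1))"

lemma prod_list_of_bool:
  "(\<Prod>y\<leftarrow>ys. of_bool (P y)) = (of_bool (\<forall>y\<in>set ys. P y) :: 'a::comm_semiring_1)"
  by (induction ys) auto

lemma nae_indicator_eq:
  assumes "ys \<noteq> []" "set ys \<subseteq> {-1, 1}"
  shows "nae_indicator ys = of_bool (\<exists>a\<in>set ys. \<exists>b\<in>set ys. a \<noteq> b)"
proof (cases "\<exists>a\<in>set ys. \<exists>b\<in>set ys. a \<noteq> b")
  case True
  then have "\<not> (\<forall>y\<in>set ys. y = 1)" "\<not> (\<forall>y\<in>set ys. y = -1)"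
    by metis+
  with True show ?thesis
    by (simp add: nae_indicator_def prod_list_of_bool)
next
  case False
  have "hd ys \<in> set ys"
    using assms(1) by simp
  with False assms(2) have "set ys = {hd ys}" "hd ys \<in> {-1, 1}"
    by auto
  with False show ?thesis
    by (auto simp: nae_indicator_def prod_list_of_bool)
qed

lemma of_bool_nae_sat:
  assumes "vs \<noteq> []" "\<forall>v\<in>set vs. x v \<in> {-1, 1}"
  shows "of_bool (nae_sat x (set vs)) = nae_indicator (map x vs)"
  using assms by (subst nae_indicator_eq) (auto simp: nae_sat_def)

definition round3 :: "outcome \<Rightarrow> outcome \<Rightarrow> outcome \<Rightarrow> real" where
  "round3 p q w =
     (if fst p * (if snd q \<and> snd w then -1 else 1) + fst q * (if snd p \<and> snd w then -1 else 1)
       + fst w * (if snd p \<and> snd q then -1 else 1) > 0 then 1 else -1)"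

text \<open>In the two patterns, entry k - 1 of the list stands for the outcome at the index i_k of
  the clause with its sign multiplied by s_k (see sat_prob_C3 and sat_prob_C5).\<close>

definition nae3_pattern :: "outcome list \<Rightarrow> real" where
  "nae3_pattern ys = nae_indicator
     [round3 (ys!0) (flip_sign (-1) (ys!1)) (ys!3), round3 (ys!1) (flip_sign (-1) (ys!2)) (ys!4),
      round3 (ys!2) (flip_sign (-1) (ys!0)) (ys!5)]"

definition nae5_pattern :: "outcome list \<Rightarrow> real" where
  "nae5_pattern ys = nae_indicator
     [round3 (ys!0) (ys!1) (ys!2), round3 (ys!0) (ys!3) (ys!4), round3 (ys!0) (ys!5) (ys!6),
      round3 (ys!0) (ys!7) (ys!8), round3 (ys!9) (ys!10) (ys!11)]"

lemma expect_nae3_pattern: "expect r 6 nae3_pattern = 15/16 - 3/4 * r^2 + 3/4 * r^4"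
  \<comment> \<open>Linearity first: then every expect1 only sees the factors that depend on its
    own outcome, which keeps the final expansion small.\<close>
  apply (simp add: nae3_pattern_def nae_indicator_def eval_nat_numeral)
  apply (simp add: expect1_expand round3_def flip_sign_def)
  apply (simp add: field_simps power2_eq_square power4_eq_xxxx)
  done

lemma expect_nae5_pattern:
  "expect r 12 nae5_pattern = 215/256 + 13/32 * r^2 - 15/32 * r^4 + 1/8 * r^6 - 1/16 * r^8"
  apply (simp add: nae5_pattern_def nae_indicator_def eval_nat_numeral)
  apply (simp add: expect1_expand round3_def)
  apply (simp add: field_simps power2_eq_square power4_eq_xxxx)
  done

definition supp :: "nat \<Rightarrow> (nat \<Rightarrow> real) \<Rightarrow> nat set" where
  "supp n v = {m \<in> {1..n}. v m \<noteq> 0}"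

definition rounding_value :: "nat \<Rightarrow> (nat \<Rightarrow> outcome) \<Rightarrow> (nat \<Rightarrow> real) \<Rightarrow> real" where
  "rounding_value n g v =
     (\<Sum>m\<in>supp n v. v m * fst (g m) * (if \<forall>l\<in>supp n v - {m}. snd (g l) then -1 else 1))"

definition round_assignment :: "nat \<Rightarrow> (nat \<Rightarrow> outcome) \<Rightarrow> (nat \<Rightarrow> real) \<Rightarrow> real" where
  "round_assignment n g v = (if rounding_value n g v > 0 then 1 else -1)"

lemma vec3_apply:
  assumes "distinct [i, j, k]"
  shows "vec3 a i b j c k i = a / sqrt 3" "vec3 a i b j c k j = b / sqrt 3"
    "vec3 a i b j c k k = c / sqrt 3" "m \<notin> {i, j, k} \<Longrightarrow> vec3 a i b j c k m = 0"
  using assms by (auto simp: vec3_def ebasis_def)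

lemma supp_vec3:
  assumes "distinct [i, j, k]" "{i, j, k} \<subseteq> {1..n}" "a \<noteq> 0" "b \<noteq> 0" "c \<noteq> 0"
  shows "supp n (vec3 a i b j c k) = {i, j, k}"
proof -
  have "vec3 a i b j c k m \<noteq> 0 \<longleftrightarrow> m \<in> {i, j, k}" for m
    using vec3_apply(1-3)[OF assms(1), of a b c] vec3_apply(4)[OF assms(1)] assms(3-5) by auto
  then show ?thesis
    using assms(2) unfolding supp_def by auto
qed

lemma rounding_value_vec3:
  assumes "distinct [i, j, k]" "{i, j, k} \<subseteq> {1..n}" "a \<noteq> 0" "b \<noteq> 0" "c \<noteq> 0"
  shows "rounding_value n g (vec3 a i b j c k) =
    (a * fst (g i) * (if snd (g j) \<and> snd (g k) then -1 else 1)
   + b * fst (g j) * (if snd (g i) \<and> snd (g k) then -1 else 1)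
   + c * fst (g k) * (if snd (g i) \<and> snd (g j) then -1 else 1)) / sqrt 3"
proof -
  have "{i, j, k} - {i} = {j, k}" "{i, j, k} - {j} = {i, k}" "{i, j, k} - {k} = {i, j}"
    using assms(1) by auto
  with assms(1) show ?thesis
    unfolding rounding_value_def supp_vec3[OF assms]
    by (simp add: vec3_apply[OF assms(1)] add_divide_distrib conj_commute)
qed

lemma round_assignment_vec3:
  assumes "distinct [i, j, k]" "{i, j, k} \<subseteq> {1..n}" "a \<noteq> 0" "b \<noteq> 0" "c \<noteq> 0"
  shows "round_assignment n g (vec3 a i b j c k)
    = round3 (flip_sign a (g i)) (flip_sign b (g j)) (flip_sign c (g k))"
  unfolding round_assignment_def rounding_value_vec3[OF assms] round3_def flip_sign_def
  by (simp add: zero_less_divide_iff mult.assoc)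

lemma round_assignment_antipodal:
  assumes "g \<in> PiE {1..n} (\<lambda>_. outcomes)" "v \<in> Vset n"
  shows "round_assignment n g (\<lambda>m. - v m) = - round_assignment n g v"
proof -
  obtain a b c i j k where v: "v = vec3 a i b j c k"
    and abc: "a \<in> {-1, 1}" "b \<in> {-1, 1}" "c \<in> {-1, 1}" and ijk: "1 \<le> i" "i < j" "j < k" "k \<le> n"
    using assms(2) unfolding Vset_def by blast
  have sign: "fst (g m) \<in> {-1, 1}" if "m \<in> {1..n}" for m
    using assms(1) that unfolding outcomes_def by (auto dest: PiE_mem)
  have summand: "x * fst (g m) * (if P then -1 else 1) \<in> {-1, 1}"
    if "x \<in> {-1, 1}" "m \<in> {1..n}" for x m P
    using sign[OF that(2)] that(1) by auto
  have odd: "p + q + w \<noteq> 0" if "p \<in> {-1, 1}" "q \<in> {-1, 1}" "w \<in> {-1, 1}" for p q w :: real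
    using that by auto
  have "rounding_value n g v \<noteq> 0"
    unfolding v using ijk abc odd[OF summand[OF abc(1)] summand[OF abc(2)] summand[OF abc(3)]]
    by (subst rounding_value_vec3) auto
  moreover have "rounding_value n g (\<lambda>m. - v m) = - rounding_value n g v"
    by (simp add: rounding_value_def supp_def sum_negf[symmetric])
  ultimately show ?thesis
    unfolding round_assignment_def by auto
qed

definition sat_prob :: "real \<Rightarrow> nat \<Rightarrow> (nat \<Rightarrow> real) set \<Rightarrow> real" where
  "sat_prob r n C = (\<Sum>g\<in>PiE {1..n} (\<lambda>_. outcomes).
     prod_prob r {1..n} g * of_bool (nae_sat (round_assignment n g) C))"

lemma round_assignment_range: "round_assignment n g v \<in> {-1, 1}"
  by (simp add: round_assignment_def)

lemma flip_sign_uminus: "flip_sign (- s) d = flip_sign (-1) (flip_sign s d)"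
  by (simp add: flip_sign_def)

lemma sat_prob_C3:
  assumes "C \<in> C3 n"
  shows "sat_prob r n C = expect r 6 nae3_pattern"
proof -
  obtain i1 i2 i3 i4 i5 i6 s1 s2 s3 s4 s5 s6 where
    ind: "distinct [i1, i2, i3, i4, i5, i6]" "set [i1, i2, i3, i4, i5, i6] \<subseteq> {1..n}" and
    sgn: "\<forall>s\<in>set [s1, s2, s3, s4, s5, s6]. s \<in> {-1, 1::real}" and
    C: "C = {vec3 s1 i1 (-s2) i2 s4 i4, vec3 s2 i2 (-s3) i3 s5 i5, vec3 s3 i3 (-s1) i1 s6 i6}"
    using assms unfolding C3_def by blast
  define js where "js = [(i1, s1), (i2, s2), (i3, s3), (i4, s4), (i5, s5), (i6, s6)]"
  define vs where
    "vs = [vec3 s1 i1 (-s2) i2 s4 i4, vec3 s2 i2 (-s3) i3 s5 i5, vec3 s3 i3 (-s1) i1 s6 i6]"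
  have "0 \<notin> set [s1, s2, s3, s4, s5, s6]"
    using bspec[OF sgn] by force
  then have nz: "s1 \<noteq> 0" "s2 \<noteq> 0" "s3 \<noteq> 0" "s4 \<noteq> 0" "s5 \<noteq> 0" "s6 \<noteq> 0"
    by auto
  have "of_bool (nae_sat (round_assignment n g) C)
      = nae3_pattern (map (\<lambda>(i, s). flip_sign s (g i)) js)" for g
  proof -
    have "of_bool (nae_sat (round_assignment n g) C)
        = nae_indicator (map (round_assignment n g) vs)"
      unfolding C vs_def by (subst of_bool_nae_sat[symmetric]) (simp_all add: round_assignment_def)
    also have "\<dots> = nae3_pattern (map (\<lambda>(i, s). flip_sign s (g i)) js)"
      using ind nz unfolding vs_def js_def nae3_pattern_def
      by (auto simp: round_assignment_vec3 flip_sign_uminus[of s1] flip_sign_uminus[of s2]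
          flip_sign_uminus[of s3])
    finally show ?thesis .
  qed
  then show ?thesis
    unfolding sat_prob_def
    using sum_prod_prob_eq_expect[of "{1..n}" js r nae3_pattern] ind sgn
    by (simp add: js_def eval_nat_numeral)
qed

lemma sat_prob_C5:
  assumes "C \<in> C5 n"
  shows "sat_prob r n C = expect r 12 nae5_pattern"
proof -
  obtain i1 i2 i3 i4 i5 i6 i7 i8 i9 i10 i11 i12 s1 s2 s3 s4 s5 s6 s7 s8 s9 s10 s11 s12 where
    ind: "distinct [i1, i2, i3, i4, i5, i6, i7, i8, i9, i10, i11, i12]"
      "set [i1, i2, i3, i4, i5, i6, i7, i8, i9, i10, i11, i12] \<subseteq> {1..n}" and
    sgn: "\<forall>s\<in>set [s1, s2, s3, s4, s5, s6, s7, s8, s9, s10, s11, s12]. s \<in> {-1, 1::real}" and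
    C: "C = {vec3 s1 i1 s2 i2 s3 i3, vec3 s1 i1 s4 i4 s5 i5, vec3 s1 i1 s6 i6 s7 i7,
           vec3 s1 i1 s8 i8 s9 i9, vec3 s10 i10 s11 i11 s12 i12}"
    using assms unfolding C5_def mem_Collect_eq by (elim exE conjE) (rule that)
  define js where "js = [(i1, s1), (i2, s2), (i3, s3), (i4, s4), (i5, s5), (i6, s6),
    (i7, s7), (i8, s8), (i9, s9), (i10, s10), (i11, s11), (i12, s12)]"
  define vs where "vs = [vec3 s1 i1 s2 i2 s3 i3, vec3 s1 i1 s4 i4 s5 i5, vec3 s1 i1 s6 i6 s7 i7,
    vec3 s1 i1 s8 i8 s9 i9, vec3 s10 i10 s11 i11 s12 i12]"
  have "0 \<notin> set [s1, s2, s3, s4, s5, s6, s7, s8, s9, s10, s11, s12]"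
    using bspec[OF sgn] by force
  then have nz: "s1 \<noteq> 0" "s2 \<noteq> 0" "s3 \<noteq> 0" "s4 \<noteq> 0" "s5 \<noteq> 0" "s6 \<noteq> 0"
    "s7 \<noteq> 0" "s8 \<noteq> 0" "s9 \<noteq> 0" "s10 \<noteq> 0" "s11 \<noteq> 0" "s12 \<noteq> 0"
    by auto
  have "of_bool (nae_sat (round_assignment n g) C)
      = nae5_pattern (map (\<lambda>(i, s). flip_sign s (g i)) js)" for g
  proof -
    have "of_bool (nae_sat (round_assignment n g) C)
        = nae_indicator (map (round_assignment n g) vs)"
      unfolding C vs_def by (subst of_bool_nae_sat[symmetric]) (simp_all add: round_assignment_def)
    also have "\<dots> = nae5_pattern (map (\<lambda>(i, s). flip_sign s (g i)) js)"
      using ind nz unfolding vs_def js_def nae5_pattern_def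
      by (auto simp: round_assignment_vec3)
    finally show ?thesis .
  qed
  then show ?thesis
    unfolding sat_prob_def
    using sum_prod_prob_eq_expect[of "{1..n}" js r nae5_pattern] ind sgn
    by (simp add: js_def eval_nat_numeral)
qed

definition vec3_range :: "nat \<Rightarrow> (nat \<Rightarrow> real) set" where
  "vec3_range n = (\<lambda>(a, i, b, j, c, k). vec3 a i b j c k) `
     ({-1, 1} \<times> {1..n} \<times> {-1, 1} \<times> {1..n} \<times> {-1, 1} \<times> {1..n})"

lemma vec3_in_vec3_range:
  "a \<in> {-1, 1} \<Longrightarrow> b \<in> {-1, 1} \<Longrightarrow> c \<in> {-1, 1} \<Longrightarrow> i \<in> {1..n} \<Longrightarrow> j \<in> {1..n} \<Longrightarrow> k \<in> {1..n}
    \<Longrightarrow> vec3 a i b j c k \<in> vec3_range n"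
  unfolding vec3_range_def by (rule image_eqI[where x = "(a, i, b, j, c, k)"]) auto

lemma C3_subset_vec3_range: "C \<in> C3 n \<Longrightarrow> C \<subseteq> vec3_range n"
  \<comment> \<open>disj_commute lets the hypothesis on s2 discharge the membership of -s2.\<close>
  unfolding C3_def by (elim CollectE exE conjE) (clarsimp simp: vec3_in_vec3_range disj_commute)

lemma C5_subset_vec3_range: "C \<in> C5 n \<Longrightarrow> C \<subseteq> vec3_range n"
  unfolding C5_def by (elim CollectE exE conjE) (clarsimp simp: vec3_in_vec3_range)

lemma finite_vec3_range: "finite (vec3_range n)"
  by (simp add: vec3_range_def)

lemma finite_C3: "finite (C3 n)"
  by (rule finite_subset[of _ "Pow (vec3_range n)"])
    (use C3_subset_vec3_range finite_vec3_range in auto)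

lemma finite_C5: "finite (C5 n)"
  by (rule finite_subset[of _ "Pow (vec3_range n)"])
    (use C5_subset_vec3_range finite_vec3_range in auto)

lemma C3_nonempty:
  assumes "6 \<le> n"
  shows "C3 n \<noteq> {}"
proof -
  have "{vec3 1 1 (-1) 2 1 4, vec3 1 2 (-1) 3 1 5, vec3 1 3 (-1) 1 1 6} \<in> C3 n"
    unfolding C3_def mem_Collect_eq
    by (rule exI[of _ 1], rule exI[of _ 2], rule exI[of _ 3], rule exI[of _ 4], rule exI[of _ 5],
        rule exI[of _ 6], (rule exI[of _ 1])+) (use assms in auto)
  then show ?thesis
    by auto
qed

lemma C5_nonempty:
  assumes "12 \<le> n"
  shows "C5 n \<noteq> {}"
proof -
  have "{vec3 1 1 1 2 1 3, vec3 1 1 1 4 1 5, vec3 1 1 1 6 1 7, vec3 1 1 1 8 1 9, vec3 1 10 1 11 1 12}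
      \<in> C5 n"
    unfolding C5_def mem_Collect_eq
    by (rule exI[of _ 1], rule exI[of _ 2], rule exI[of _ 3], rule exI[of _ 4], rule exI[of _ 5],
        rule exI[of _ 6], rule exI[of _ 7], rule exI[of _ 8], rule exI[of _ 9], rule exI[of _ 10],
        rule exI[of _ 11], rule exI[of _ 12], (rule exI[of _ 1])+) (use assms in auto)
  then show ?thesis
    by auto
qed

lemma expected_Phi_weight:
  assumes "12 \<le> n"
  shows "(\<Sum>g\<in>PiE {1..n} (\<lambda>_. outcomes). prod_prob r {1..n} g * Phi_weight n (round_assignment n g))
     = (1 - 3 / sqrt 21) * expect r 6 nae3_pattern + 3 / sqrt 21 * expect r 12 nae5_pattern"
proof -
  let ?P = "PiE {1..n} (\<lambda>_. outcomes)"
  let ?sat = "\<lambda>g C. of_bool (nae_sat (round_assignment n g) C) :: real"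
  define w3 where "w3 = (1 - 3 / sqrt 21) / real (card (C3 n))"
  define w5 where "w5 = 3 / (sqrt 21 * real (card (C5 n)))"
  have weight: "Phi_weight n (round_assignment n g)
      = (\<Sum>C\<in>C3 n. w3 * ?sat g C) + (\<Sum>C\<in>C5 n. w5 * ?sat g C)" for g
    unfolding Phi_weight_def w3_def w5_def
      sum.inter_filter[OF finite_C3] sum.inter_filter[OF finite_C5]
    by (simp add: of_bool_def if_distrib cong: if_cong)
  have "(\<Sum>g\<in>?P. prod_prob r {1..n} g * Phi_weight n (round_assignment n g))
      = (\<Sum>C\<in>C3 n. w3 * sat_prob r n C) + (\<Sum>C\<in>C5 n. w5 * sat_prob r n C)"
    unfolding weight sat_prob_def
    by (simp add: sum.distrib sum_distrib_left algebra_simps sum.swap[where A = "C3 n"]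
        sum.swap[where A = "C5 n"])
  also have "\<dots> = (\<Sum>C\<in>C3 n. w3 * expect r 6 nae3_pattern) + (\<Sum>C\<in>C5 n. w5 * expect r 12 nae5_pattern)"
    by (simp add: sat_prob_C3 sat_prob_C5)
  also have "\<dots> = (1 - 3 / sqrt 21) * expect r 6 nae3_pattern + 3 / sqrt 21 * expect r 12 nae5_pattern"
    using C3_nonempty C5_nonempty assms finite_C3[of n] finite_C5[of n]
    by (simp add: w3_def w5_def card_gt_0_iff)
  finally show ?thesis .
qed

text \<open>u = r^2 maximises the expected weight over [0, 1], and the value there is exactly
  3 (sqrt 21 - 4) / 2.\<close>

lemma rounding_parameter_identity:
  fixes s w u :: real
  assumes "2 * u = 1 - w" "w\<^sup>2 = 8 * s - 36" "s\<^sup>2 = 21"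
  shows "(s - 3) * (15/16 - 3/4 * u + 3/4 * u^2)
      + 3 * (215/256 + 13/32 * u - 15/32 * u^2 + 1/8 * u^3 - 1/16 * u^4) = s * (3 * (s - 4) / 2)"
proof -
  have "(s - 3) * (240 - 192 * u + 192 * u^2) + 3 * (215 + 104 * u - 120 * u^2 + 32 * u^3 - 16 * u^4)
      = 128 * s * (3 * (s - 4))"
    using assms by algebra
  then show ?thesis
    by (simp add: field_simps)
qed

lemma exists_rounding_parameter:
  "\<exists>r::real. 0 \<le> r \<and> r \<le> 1 \<and>
     (1 - 3 / sqrt 21) * (15/16 - 3/4 * r^2 + 3/4 * r^4) +
     3 / sqrt 21 * (215/256 + 13/32 * r^2 - 15/32 * r^4 + 1/8 * r^6 - 1/16 * r^8) = 3 * (sqrt 21 - 4) / 2"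
proof -
  define s where "s = sqrt (21::real)"
  have s2: "s\<^sup>2 = 21"
    by (simp add: s_def)
  have s_lower: "9/2 \<le> s"
    unfolding s_def by (rule real_le_rsqrt) (simp add: power2_eq_square)
  have s_upper: "s < 37/8"
    unfolding s_def by (rule real_less_lsqrt) (simp_all add: power2_eq_square)
  define w where "w = sqrt (8 * s - 36)"
  have w: "w\<^sup>2 = 8 * s - 36" "0 \<le> w" "w < 1"
    unfolding w_def using s_lower s_upper by (auto simp: real_sqrt_lt_1_iff)
  define u where "u = (1 - w) / 2"
  define r where "r = sqrt u"
  have r: "0 \<le> r" "r \<le> 1" "r\<^sup>2 = u"
    unfolding r_def u_def using w by auto
  have r_powers: "r^4 = u^2" "r^6 = u^3" "r^8 = u^4"
    unfolding r(3)[symmetric] by (simp_all flip: power_mult)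
  have "2 * u = 1 - w"
    by (simp add: u_def)
  note identity = rounding_parameter_identity[OF this w(1) s2]
  have combine: "(1 - 3 / s) * A + 3 / s * B = ((s - 3) * A + 3 * B) / s" for A B
    using s_lower by (simp add: field_simps)
  have "(1 - 3 / s) * (15/16 - 3/4 * r^2 + 3/4 * r^4) +
     3 / s * (215/256 + 13/32 * r^2 - 15/32 * r^4 + 1/8 * r^6 - 1/16 * r^8) = 3 * (s - 4) / 2"
    unfolding combine r(3) r_powers identity using s_lower by simp
  then show ?thesis
    using r unfolding s_def by blast
qed

theorem mainTheorem9:
  fixes n :: nat
  assumes "n \<ge> 12"
  shows "\<exists>x :: (nat \<Rightarrow> real) \<Rightarrow> real.
           (\<forall>v\<in>Vset n. x v \<in> {-1, 1} \<and> x (\<lambda>m. - v m) = - x v) \<and>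
           Phi_weight n x \<ge> 3 * (sqrt 21 - 4) / 2"
proof -
  let ?P = "PiE {1..n} (\<lambda>_. outcomes)"
  obtain r where r: "0 \<le> r" "r \<le> 1" and optimal:
    "(1 - 3 / sqrt 21) * expect r 6 nae3_pattern + 3 / sqrt 21 * expect r 12 nae5_pattern
       = 3 * (sqrt 21 - 4) / 2"
    unfolding expect_nae3_pattern expect_nae5_pattern using exists_rounding_parameter by blast
  have "finite ?P" "?P \<noteq> {}"
    by (simp_all add: finite_PiE PiE_eq_empty_iff outcomes_def)
  then obtain g where g: "g \<in> ?P"
    and average: "(\<Sum>g\<in>?P. prod_prob r {1..n} g * Phi_weight n (round_assignment n g))
           \<le> Phi_weight n (round_assignment n g)"
    using exists_ge_weighted_average[of ?P "prod_prob r {1..n}"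
        "\<lambda>g. Phi_weight n (round_assignment n g)"]
      prod_prob_nonneg[OF r] sum_prod_prob[of "{1..n}" r]
    by blast
  have "Phi_weight n (round_assignment n g) \<ge> 3 * (sqrt 21 - 4) / 2"
    using average unfolding expected_Phi_weight[OF assms] optimal .
  then show ?thesis
    using round_assignment_range round_assignment_antipodal[OF g] by blast
qed

end
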